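(* Let $A:=\{u_i\mid i\in I\}\subseteq\mathbb{R}^n$ be an indexed family with $\operatorname{card}I\ge n+1$ and $o\notin\operatorname{conv}A$. Then there exist nonempty sets $I_1,I_2\subseteq I$ with $I_1\cap I_2=\emptyset$, $I_1\cup I_2=I$ and $\operatorname{conv}A_1\cap\big((0,1]\operatorname{conv}A_2\big)\neq\emptyset$, where $A_k:=\{u_i\mid i\in I_k\}$ for $k\in\{1,2\}$.
   Context: $n\ge2$; $o$ denotes the zero vector of $\mathbb{R}^n$; $(0,1]B:=\{tb\mid t\in(0,1],b\in B\}$; $\operatorname{conv}$ denotes convex hull. *)

theory Defs
  imports "HOL-Analysis.Analysis"
begin

definition scale_0_1 :: "'a::real_vector set \<Rightarrow> 'a set" where
  "scale_0_1 B = {t *\<^sub>R b | t b. t \<in> {0<..1} \<and> b \<in> B}"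

end

theory Submission
  imports Defs
begin

text \<open>Add the origin to \<open>n + 1\<close> of the points: the resulting \<open>n + 2\<close> points are affinely
  dependent, so Radon's theorem splits them into two parts whose convex hulls meet. A common
  point \<open>z\<close> is nonzero, as the part without the origin lies in \<open>conv A\<close>, and a nonzero point of
  \<open>conv ({o} \<union> Y)\<close> lies in \<open>(0,1] conv Y\<close>. Repeated points \<open>u\<^sub>i = u\<^sub>j\<close> give a partition directly.\<close>

lemma scale_0_1_mono: "A \<subseteq> B \<Longrightarrow> scale_0_1 A \<subseteq> scale_0_1 B"
  unfolding scale_0_1_def by blast

lemma scale_0_1_empty [simp]: "scale_0_1 {} = {}"
  unfolding scale_0_1_def by blast

lemma convex_hull_insert_0_diff_0_subset_scale_0_1:
  fixes Y :: "'a::real_vector set"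
  shows "convex hull (insert 0 Y) - {0} \<subseteq> scale_0_1 (convex hull Y)"
proof
  fix z assume z: "z \<in> convex hull (insert 0 Y) - {0}"
  then have "Y \<noteq> {}" by auto
  with z obtain s t b where "s \<ge> 0" "t \<ge> 0" "s + t = 1" "b \<in> convex hull Y" "z = t *\<^sub>R b"
    by (auto simp: convex_hull_insert)
  moreover from z \<open>z = t *\<^sub>R b\<close> have "t \<noteq> 0" by auto
  ultimately show "z \<in> scale_0_1 (convex hull Y)"
    unfolding scale_0_1_def by force
qed

lemma convex_hull_meets_scale_0_1_partition:
  fixes S :: "'a::euclidean_space set"
  assumes "finite S" and "card S \<ge> DIM('a) + 1" and "0 \<notin> convex hull S"
  shows "\<exists>X Y. X \<union> Y = S \<and> X \<inter> Y = {} \<and> convex hull X \<inter> scale_0_1 (convex hull Y) \<noteq> {}"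
proof -
  have "0 \<notin> S" using assms(3) by (meson hull_inc)
  with assms(1,2) have "affine_dependent (insert 0 S)"
    by (intro affine_dependent_biggerset) auto
  then obtain M P where MP: "M \<inter> P = {}" "M \<union> P = insert 0 S"
      "convex hull M \<inter> convex hull P \<noteq> {}"
    using Radon_partition[of "insert 0 S"] assms(1) by auto
  have "\<exists>X Y. X \<inter> Y = {} \<and> X \<union> Y = insert 0 S \<and> 0 \<in> Y \<and>
      convex hull X \<inter> convex hull Y \<noteq> {}"
  proof (cases "0 \<in> P")
    case True
    with MP show ?thesis by (intro exI[of _ M] exI[of _ P]) simp
  next
    case False
    with MP have "0 \<in> M" by blast
    with MP show ?thesis by (intro exI[of _ P] exI[of _ M]) (simp add: Int_commute Un_commute)
  qed
  then obtain X Y where XY: "X \<inter> Y = {}" "X \<union> Y = insert 0 S" "0 \<in> Y"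
      "convex hull X \<inter> convex hull Y \<noteq> {}"
    by blast
  then obtain z where z: "z \<in> convex hull X" "z \<in> convex hull Y"
    by blast
  have "0 \<notin> X" using XY(1,3) by blast
  then have "X \<union> (Y - {0}) = (X \<union> Y) - {0}" by (simp add: Un_Diff)
  also have "\<dots> = S" using XY(2) \<open>0 \<notin> S\<close> by simp
  finally have partition: "X \<union> (Y - {0}) = S" .
  then have "z \<noteq> 0" using z(1) assms(3) hull_mono[of X S] by blast
  moreover have "insert 0 (Y - {0}) = Y" using XY(3) by blast
  ultimately have "z \<in> scale_0_1 (convex hull (Y - {0}))"
    using z(2) convex_hull_insert_0_diff_0_subset_scale_0_1[of "Y - {0}"] by auto
  moreover have "X \<inter> (Y - {0}) = {}" using XY(1) by blast
  ultimately show ?thesis using partition z(1) by blast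
qed

lemma index_partition_if_hulls_meet:
  assumes "K \<subseteq> I" and "X \<subseteq> u ` (I - K)" and "Y \<subseteq> u ` K"
    and "convex hull X \<inter> scale_0_1 (convex hull Y) \<noteq> {}"
  shows "\<exists>I1 I2. I1 \<noteq> {} \<and> I2 \<noteq> {} \<and> I1 \<subseteq> I \<and> I2 \<subseteq> I \<and>
           I1 \<inter> I2 = {} \<and> I1 \<union> I2 = I \<and>
           convex hull (u ` I1) \<inter> scale_0_1 (convex hull (u ` I2)) \<noteq> {}"
proof (intro exI conjI)
  have "convex hull X \<inter> scale_0_1 (convex hull Y) \<subseteq>
      convex hull (u ` (I - K)) \<inter> scale_0_1 (convex hull (u ` K))"
    using assms(2,3) by (intro Int_mono hull_mono scale_0_1_mono)
  with assms(4) show "convex hull (u ` (I - K)) \<inter> scale_0_1 (convex hull (u ` K)) \<noteq> {}"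
    by blast
  then show "I - K \<noteq> {}" "K \<noteq> {}"
    by (metis convex_hull_empty image_empty inf_bot_left,
        metis convex_hull_empty image_empty inf_bot_right scale_0_1_empty)
qed (use assms(1) in auto)

theorem mainTheorem9:
  fixes u :: "'i \<Rightarrow> real ^ 'n" and I :: "'i set"
  assumes "CARD('n) \<ge> 2"
    and "infinite I \<or> card I \<ge> CARD('n) + 1"
    and "0 \<notin> convex hull (u ` I)"
  shows "\<exists>I1 I2. I1 \<noteq> {} \<and> I2 \<noteq> {} \<and> I1 \<subseteq> I \<and> I2 \<subseteq> I \<and>
           I1 \<inter> I2 = {} \<and> I1 \<union> I2 = I \<and>
           convex hull (u ` I1) \<inter> scale_0_1 (convex hull (u ` I2)) \<noteq> {}"
proof (cases "inj_on u I")
  case False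
  then obtain i j where ij: "i \<in> I" "j \<in> I" "i \<noteq> j" "u i = u j"
    unfolding inj_on_def by blast
  have "u j \<in> convex hull {u i} \<inter> scale_0_1 (convex hull {u j})"
    unfolding scale_0_1_def using ij(4) by (auto intro!: exI[of _ 1])
  moreover have "{u i} \<subseteq> u ` (I - {j})" using ij by blast
  ultimately show ?thesis
    using ij(2) by (intro index_partition_if_hulls_meet[of "{j}" I "{u i}" u "{u j}"]) auto
next
  case True
  with assms(2) have "infinite (u ` I) \<or> card (u ` I) \<ge> CARD('n) + 1"
    by (auto simp: card_image finite_image_iff)
  then obtain S where S: "finite S" "card S = CARD('n) + 1" "S \<subseteq> u ` I"
    by (metis infinite_arbitrarily_large obtain_subset_with_card_n)
  moreover have "0 \<notin> convex hull S" using S(3) assms(3) hull_mono by blast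
  ultimately obtain X Y where
    XY: "X \<union> Y = S" "X \<inter> Y = {}" "convex hull X \<inter> scale_0_1 (convex hull Y) \<noteq> {}"
    using convex_hull_meets_scale_0_1_partition[of S] by auto
  show ?thesis
    using XY S(3) by (intro index_partition_if_hulls_meet[of "{i\<in>I. u i \<in> Y}" I X u Y]) auto
qed

end
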